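(* Let $d$ be a separated metric on a compact Hausdorff space $X$. Then the topology symmetrically induced by $d$ coincides with the topology of $X$ if and only if $d\colon X\times X\to[0,\infty]$ is continuous with respect to the lower topology on $[0,\infty]$. Moreover, if $(X,d)$ is a separated metric compact Hausdorff space and $d$ does not attain the value $\infty$, this condition is equivalent to continuity of $d\colon X\times X\to[0,\infty[$ with respect to the Euclidean topology on $[0,\infty[$.
   Context: A metric on a set $X$ is a map $d\colon X\times X\to[0,\infty]$ with $d(x,x)=0$ and $d(x,z)\le d(x,y)+d(y,z)$ (not necessarily symmetric, $\infty$ allowed); separated means $d(x,y)=0=d(y,x)$ implies $x=y$. The topology symmetrically induced by $d$ is the topology generated by the sets $\{x\mid d(x_0,x)<u\}$ and $\{x\mid d(x,x_0)<u\}$ for $x_0\in X$, $u\in[0,\infty]$. The lower topology on $[0,\infty]$ is generated by the sets $[0,u[$, and the upper topology by the sets $]u,\infty]$ ($u\in[0,\infty]$). A separated metric compact Hausdorff space is a compact Hausdorff space $X$ with a separated metric $d$ continuous as a map $X\times X\to[0,\infty]$ for the upper topology. *)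

theory Defs
  imports "HOL-Analysis.Analysis" "HOL-Library.Extended_Nonnegative_Real"
begin

text \<open>A (not necessarily symmetric, possibly infinite-valued) metric on the carrier of X,
  with values in [0,\<infinity>] modelled by ennreal.\<close>
definition is_metric_on :: "'a set \<Rightarrow> ('a \<Rightarrow> 'a \<Rightarrow> ennreal) \<Rightarrow> bool" where
  "is_metric_on X d \<longleftrightarrow>
     (\<forall>x\<in>X. d x x = 0) \<and> (\<forall>x\<in>X. \<forall>y\<in>X. \<forall>z\<in>X. d x z \<le> d x y + d y z)"

definition separated_metric_on :: "'a set \<Rightarrow> ('a \<Rightarrow> 'a \<Rightarrow> ennreal) \<Rightarrow> bool" where
  "separated_metric_on X d \<longleftrightarrow> is_metric_on X d \<and>
     (\<forall>x\<in>X. \<forall>y\<in>X. d x y = 0 \<and> d y x = 0 \<longrightarrow> x = y)"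

text \<open>The topology on the carrier of X symmetrically induced by d: generated by the sets
  {x | d x0 x < u} and {x | d x x0 < u}, x0 in X, u in [0,\<infinity>] (the whole space is
  included explicitly, as it is open in any topology).\<close>
definition sym_induced_topology :: "'a topology \<Rightarrow> ('a \<Rightarrow> 'a \<Rightarrow> ennreal) \<Rightarrow> 'a topology" where
  "sym_induced_topology T d = topology_generated_by
     (insert (topspace T)
       ({{x \<in> topspace T. d x0 x < u} | x0 u. x0 \<in> topspace T} \<union>
        {{x \<in> topspace T. d x x0 < u} | x0 u. x0 \<in> topspace T}))"

definition lower_topology :: "ennreal topology" where
  "lower_topology = topology_generated_by (insert UNIV (range lessThan))"

definition upper_topology :: "ennreal topology" where
  "upper_topology = topology_generated_by (insert UNIV (range greaterThan))"

definition sep_metric_compact_Hausdorff :: "'a topology \<Rightarrow> ('a \<Rightarrow> 'a \<Rightarrow> ennreal) \<Rightarrow> bool" where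
  "sep_metric_compact_Hausdorff T d \<longleftrightarrow>
     compact_space T \<and> Hausdorff_space T \<and> separated_metric_on (topspace T) d \<and>
     continuous_map (prod_topology T T) upper_topology (\<lambda>(x, y). d x y)"

end

theory Submission imports Defs begin

text \<open>If d is lower continuous, every d-ball is open, so the symmetrically induced topology
  is coarser than T; it is Hausdorff because d is separated, and a Hausdorff topology coarser
  than a compact Hausdorff one coincides with it. Conversely, if the two topologies agree, the
  triangle inequality d a b \<le> d a x + d x y + d y b shows that d a b < u holds on a product of
  balls around (x, y) whenever d x y < u. When d is finite, continuity for the upper topology
  makes d lower semicontinuous, and continuity for the lower topology is exactly upper
  semicontinuity.\<close>

lemma continuous_map_lower_topology_iff:
  "continuous_map X lower_topology f \<longleftrightarrow> (\<forall>u. openin X {x \<in> topspace X. f x < u})"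
proof -
  have "f -` {..<u} \<inter> topspace X = {x \<in> topspace X. f x < u}" for u
    by auto
  then show ?thesis
    unfolding lower_topology_def continuous_on_generated_topo_iff
    by (auto simp: Int_absorb1) (metis rangeI)
qed

lemma continuous_map_upper_topology_iff:
  "continuous_map X upper_topology f \<longleftrightarrow> (\<forall>u. openin X {x \<in> topspace X. u < f x})"
proof -
  have "f -` {u<..} \<inter> topspace X = {x \<in> topspace X. u < f x}" for u
    by auto
  then show ?thesis
    unfolding upper_topology_def continuous_on_generated_topo_iff
    by (auto simp: Int_absorb1) (metis rangeI)
qed

lemma ennreal_ex_add_add_less:
  fixes a u :: ennreal
  assumes "a < u"
  shows "\<exists>e>0. a + e + e < u"
proof (cases u rule: ennreal_cases)
  case (real b)
  obtain c where a: "a = ennreal c" "0 \<le> c"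
    using assms by (cases a rule: ennreal_cases) auto
  with assms real have "c < b"
    by (simp add: ennreal_less_iff)
  have "a + ennreal ((b - c) / 3) + ennreal ((b - c) / 3) = ennreal (c + 2 * ((b - c) / 3))"
    using a \<open>c < b\<close> by (simp flip: ennreal_plus)
  also have "\<dots> < u"
    using real a \<open>c < b\<close> by (simp add: ennreal_less_iff field_simps)
  finally show ?thesis
    using \<open>c < b\<close> by (intro exI[of _ "ennreal ((b - c) / 3)"]) auto
next
  case top
  with assms show ?thesis
    by (intro exI[of _ 1]) (auto simp flip: less_top)
qed

lemma ennreal_less_iff_less_enn2real:
  "x \<noteq> \<infinity> \<Longrightarrow> 0 \<le> a \<Longrightarrow> ennreal a < x \<longleftrightarrow> a < enn2real x"
  by (cases x rule: ennreal_cases) (auto simp: ennreal_less_iff)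

definition balls_openin :: "'a topology \<Rightarrow> ('a \<Rightarrow> 'a \<Rightarrow> ennreal) \<Rightarrow> bool" where
  "balls_openin T d \<longleftrightarrow> (\<forall>x0\<in>topspace T. \<forall>u.
     openin T {x \<in> topspace T. d x0 x < u} \<and> openin T {x \<in> topspace T. d x x0 < u})"

lemma topspace_sym_induced_topology [simp]:
  "topspace (sym_induced_topology T d) = topspace T"
  unfolding sym_induced_topology_def by auto

lemma openin_sym_induced_topology_ball_from:
  "x0 \<in> topspace T \<Longrightarrow> openin (sym_induced_topology T d) {x \<in> topspace T. d x0 x < u}"
  unfolding sym_induced_topology_def by (rule topology_generated_by_Basis) blast

lemma openin_sym_induced_topology_ball_to:
  "x0 \<in> topspace T \<Longrightarrow> openin (sym_induced_topology T d) {x \<in> topspace T. d x x0 < u}"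
  unfolding sym_induced_topology_def by (rule topology_generated_by_Basis) blast

lemma balls_openin_sym_induced_topology: "balls_openin (sym_induced_topology T d) d"
  unfolding balls_openin_def
  by (simp add: openin_sym_induced_topology_ball_from openin_sym_induced_topology_ball_to)

lemma openin_sym_induced_topology_imp_openin:
  assumes "balls_openin T d" and U: "openin (sym_induced_topology T d) U"
  shows "openin T U"
proof -
  have gen: "generate_topology_on (insert (topspace T)
      ({{x \<in> topspace T. d x0 x < u} | x0 u. x0 \<in> topspace T} \<union>
       {{x \<in> topspace T. d x x0 < u} | x0 u. x0 \<in> topspace T})) U"
    using U unfolding sym_induced_topology_def openin_topology_generated_by_iff .
  show ?thesis
    by (rule generate_topology_on_coarsest[of "openin T", OF istopology_openin _ gen])
      (use assms(1) in \<open>auto simp: balls_openin_def\<close>)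
qed

lemma continuous_map_lower_topology_iff_balls_openin:
  assumes "is_metric_on (topspace T) d"
  shows "continuous_map (prod_topology T T) lower_topology (\<lambda>(x, y). d x y) \<longleftrightarrow> balls_openin T d"
proof
  assume "continuous_map (prod_topology T T) lower_topology (\<lambda>(x, y). d x y)"
  then have W: "openin (prod_topology T T) {p \<in> topspace (prod_topology T T). (\<lambda>(x, y). d x y) p < u}"
    for u
    unfolding continuous_map_lower_topology_iff by blast
  show "balls_openin T d"
    unfolding balls_openin_def
  proof (intro ballI allI conjI)
    fix x0 u assume x0: "x0 \<in> topspace T"
    have "continuous_map T (prod_topology T T) (\<lambda>x. (x0, x))"
      and "continuous_map T (prod_topology T T) (\<lambda>x. (x, x0))"
      using x0 by (auto intro: continuous_map_pairedI)
    from this[THEN openin_continuous_map_preimage, OF W[of u]]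
    show "openin T {x \<in> topspace T. d x0 x < u}" and "openin T {x \<in> topspace T. d x x0 < u}"
      using x0 by (simp_all cong: conj_cong)
  qed
next
  assume balls: "balls_openin T d"
  have refl: "\<And>x. x \<in> topspace T \<Longrightarrow> d x x = 0"
    and tri: "\<And>x y z. \<lbrakk>x \<in> topspace T; y \<in> topspace T; z \<in> topspace T\<rbrakk> \<Longrightarrow> d x z \<le> d x y + d y z"
    using assms unfolding is_metric_on_def by blast+
  show "continuous_map (prod_topology T T) lower_topology (\<lambda>(x, y). d x y)"
    unfolding continuous_map_lower_topology_iff openin_prod_topology_alt
  proof (intro allI impI)
    fix u x y
    let ?W = "{p \<in> topspace (prod_topology T T). (\<lambda>(x, y). d x y) p < u}"
    assume "(x, y) \<in> ?W"
    then have x: "x \<in> topspace T" and y: "y \<in> topspace T" and "d x y < u"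
      by auto
    then obtain e where "e > 0" and e: "d x y + e + e < u"
      using ennreal_ex_add_add_less by blast
    define U where "U = {a \<in> topspace T. d a x < e}"
    define V where "V = {b \<in> topspace T. d y b < e}"
    have "U \<times> V \<subseteq> ?W"
    proof (intro subsetI)
      fix p assume "p \<in> U \<times> V"
      then obtain a b where p: "p = (a, b)" and a: "a \<in> U" and b: "b \<in> V"
        by blast
      then have at: "a \<in> topspace T" and bt: "b \<in> topspace T"
        unfolding U_def V_def by auto
      have "d a b \<le> d a x + (d x y + d y b)"
        using tri[OF at x bt] tri[OF x y bt] by (meson add_left_mono order_trans)
      also have "\<dots> \<le> e + (d x y + e)"
        using a b unfolding U_def V_def by (intro add_mono) auto
      also have "\<dots> < u"
        using e by (simp add: ac_simps)
      finally show "p \<in> ?W"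
        using at bt p by simp
    qed
    moreover have "openin T U" "openin T V" "x \<in> U" "y \<in> V"
      using balls x y \<open>e > 0\<close> refl unfolding balls_openin_def U_def V_def by auto
    ultimately show "\<exists>U V. openin T U \<and> openin T V \<and> x \<in> U \<and> y \<in> V \<and> U \<times> V \<subseteq> ?W"
      by blast
  qed
qed

lemma Hausdorff_space_sym_induced_topology:
  assumes "separated_metric_on (topspace T) d"
  shows "Hausdorff_space (sym_induced_topology T d)"
proof -
  let ?S = "sym_induced_topology T d"
  have refl: "\<And>x. x \<in> topspace T \<Longrightarrow> d x x = 0"
    and tri: "\<And>x y z. \<lbrakk>x \<in> topspace T; y \<in> topspace T; z \<in> topspace T\<rbrakk> \<Longrightarrow> d x z \<le> d x y + d y z"
    and sep: "\<And>x y. \<lbrakk>x \<in> topspace T; y \<in> topspace T; d x y = 0; d y x = 0\<rbrakk> \<Longrightarrow> x = y"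
    using assms unfolding separated_metric_on_def is_metric_on_def by blast+
  have separate: "\<exists>U V. openin ?S U \<and> openin ?S V \<and> a \<in> U \<and> b \<in> V \<and> disjnt U V"
    if a: "a \<in> topspace T" and b: "b \<in> topspace T" and "d a b \<noteq> 0" for a b
  proof -
    obtain e where "e > 0" and e: "e + e < d a b"
      using ennreal_ex_add_add_less[of 0 "d a b"] \<open>d a b \<noteq> 0\<close>
      by (auto simp: zero_less_iff_neq_zero)
    define U where "U = {z \<in> topspace T. d a z < e}"
    define V where "V = {z \<in> topspace T. d z b < e}"
    have "disjnt U V"
      unfolding disjnt_iff
    proof (intro allI notI, elim conjE)
      fix z assume z: "z \<in> U" "z \<in> V"
      then have "d a b \<le> d a z + d z b"
        using tri[OF a _ b] unfolding U_def by blast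
      also have "\<dots> \<le> e + e"
        using z unfolding U_def V_def by (intro add_mono) auto
      finally show False
        using e by simp
    qed
    moreover have "a \<in> U" "b \<in> V"
      using a b \<open>e > 0\<close> refl unfolding U_def V_def by auto
    moreover have "openin ?S U" "openin ?S V"
      unfolding U_def V_def
      by (simp_all add: openin_sym_induced_topology_ball_from[OF a] openin_sym_induced_topology_ball_to[OF b])
    ultimately show ?thesis
      by blast
  qed
  show ?thesis
    unfolding Hausdorff_space_def
  proof (intro allI impI, elim conjE)
    fix x y assume "x \<in> topspace ?S" "y \<in> topspace ?S" "x \<noteq> y"
    then have x: "x \<in> topspace T" and y: "y \<in> topspace T"
      by simp_all
    with \<open>x \<noteq> y\<close> consider "d x y \<noteq> 0" | "d y x \<noteq> 0"
      using sep by blast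
    then show "\<exists>U V. openin ?S U \<and> openin ?S V \<and> x \<in> U \<and> y \<in> V \<and> disjnt U V"
    proof cases
      case 1
      then show ?thesis
        using separate[OF x y] by blast
    next
      case 2
      then obtain U V where "openin ?S U" "openin ?S V" "y \<in> U" "x \<in> V" "disjnt U V"
        using separate[OF y x] by blast
      then show ?thesis
        by (metis disjnt_sym)
    qed
  qed
qed

theorem sym_induced_topology_eq_iff_continuous_map_lower:
  assumes "compact_space T" "Hausdorff_space T" "separated_metric_on (topspace T) d"
  shows "sym_induced_topology T d = T \<longleftrightarrow>
    continuous_map (prod_topology T T) lower_topology (\<lambda>(x, y). d x y)"
proof -
  have metric: "is_metric_on (topspace T) d"
    using assms(3) unfolding separated_metric_on_def by blast
  show ?thesis
    unfolding continuous_map_lower_topology_iff_balls_openin[OF metric]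
  proof
    assume "sym_induced_topology T d = T"
    then show "balls_openin T d"
      using balls_openin_sym_induced_topology by metis
  next
    assume "balls_openin T d"
    then have coarser: "openin (sym_induced_topology T d) U \<Longrightarrow> openin T U" for U
      by (rule openin_sym_induced_topology_imp_openin)
    have "T = sym_induced_topology T d"
      by (rule compact_Hausdorff_space_optimal[OF _ coarser
            Hausdorff_space_sym_induced_topology[OF assms(3)] assms(1)]) simp
    then show "sym_induced_topology T d = T"
      by simp
  qed
qed

lemma continuous_map_lower_topology_iff_upper_semicontinuous_enn2real:
  assumes "\<And>x. x \<in> topspace X \<Longrightarrow> f x \<noteq> \<infinity>"
  shows "continuous_map X lower_topology f \<longleftrightarrow>
    (\<forall>b. openin X {x \<in> topspace X. enn2real (f x) < b})"
  unfolding continuous_map_lower_topology_iff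
proof (intro iffI allI)
  fix b
  assume "\<forall>u. openin X {x \<in> topspace X. f x < u}"
  moreover have "{x \<in> topspace X. enn2real (f x) < b} = {x \<in> topspace X. f x < ennreal b}"
    using assms by (auto simp: less_top)
  ultimately show "openin X {x \<in> topspace X. enn2real (f x) < b}"
    by simp
next
  fix u :: ennreal
  assume lt: "\<forall>b. openin X {x \<in> topspace X. enn2real (f x) < b}"
  show "openin X {x \<in> topspace X. f x < u}"
  proof (cases u rule: ennreal_cases)
    case (real b)
    then have "{x \<in> topspace X. f x < u} = {x \<in> topspace X. enn2real (f x) < b}"
      using assms by (auto simp: less_top)
    with lt show ?thesis
      by simp
  next
    case top
    then have "{x \<in> topspace X. f x < u} = topspace X"
      using assms by (auto simp: less_top)
    then show ?thesis
      by simp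
  qed
qed

lemma lower_semicontinuous_enn2real_if_continuous_map_upper:
  assumes "\<And>x. x \<in> topspace X \<Longrightarrow> f x \<noteq> \<infinity>" "continuous_map X upper_topology f"
  shows "openin X {x \<in> topspace X. a < enn2real (f x)}"
proof (cases "0 \<le> a")
  case True
  then have "{x \<in> topspace X. a < enn2real (f x)} = {x \<in> topspace X. ennreal a < f x}"
    using assms(1) ennreal_less_iff_less_enn2real by blast
  then show ?thesis
    using assms(2) by (simp add: continuous_map_upper_topology_iff)
next
  case False
  then have "{x \<in> topspace X. a < enn2real (f x)} = topspace X"
    by (auto intro: less_le_trans[OF _ enn2real_nonneg])
  then show ?thesis
    by simp
qed

theorem continuous_map_lower_topology_iff_continuous_map_enn2real:
  assumes "\<And>x. x \<in> topspace X \<Longrightarrow> f x \<noteq> \<infinity>" "continuous_map X upper_topology f"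
  shows "continuous_map X lower_topology f \<longleftrightarrow>
    continuous_map X (subtopology euclideanreal {0..}) (\<lambda>x. enn2real (f x))"
proof -
  have "continuous_map X lower_topology f \<longleftrightarrow>
      (\<forall>b. openin X {x \<in> topspace X. enn2real (f x) < b})"
    by (rule continuous_map_lower_topology_iff_upper_semicontinuous_enn2real[OF assms(1)])
  moreover have "openin X {x \<in> topspace X. a < enn2real (f x)}" for a
    by (rule lower_semicontinuous_enn2real_if_continuous_map_upper[OF assms])
  ultimately show ?thesis
    unfolding continuous_map_upper_lower_semicontinuous_lt_gen by simp
qed

theorem proposition2p10:
  fixes T :: "'a topology" and d :: "'a \<Rightarrow> 'a \<Rightarrow> ennreal"
  shows "(compact_space T \<and> Hausdorff_space T \<and> separated_metric_on (topspace T) d \<longrightarrow>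
           (sym_induced_topology T d = T \<longleftrightarrow>
            continuous_map (prod_topology T T) lower_topology (\<lambda>(x, y). d x y)))
       \<and> (sep_metric_compact_Hausdorff T d \<and> (\<forall>x\<in>topspace T. \<forall>y\<in>topspace T. d x y \<noteq> \<infinity>) \<longrightarrow>
           (continuous_map (prod_topology T T) lower_topology (\<lambda>(x, y). d x y) \<longleftrightarrow>
            continuous_map (prod_topology T T) (subtopology euclideanreal {0..})
              (\<lambda>(x, y). enn2real (d x y))))"
proof (intro conjI impI)
  assume "compact_space T \<and> Hausdorff_space T \<and> separated_metric_on (topspace T) d"
  then show "sym_induced_topology T d = T \<longleftrightarrow>
      continuous_map (prod_topology T T) lower_topology (\<lambda>(x, y). d x y)"
    by (intro sym_induced_topology_eq_iff_continuous_map_lower) auto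
next
  assume "sep_metric_compact_Hausdorff T d \<and> (\<forall>x\<in>topspace T. \<forall>y\<in>topspace T. d x y \<noteq> \<infinity>)"
  then have "continuous_map (prod_topology T T) lower_topology (\<lambda>(x, y). d x y) \<longleftrightarrow>
      continuous_map (prod_topology T T) (subtopology euclideanreal {0..})
        (\<lambda>p. enn2real ((\<lambda>(x, y). d x y) p))"
    unfolding sep_metric_compact_Hausdorff_def
    by (intro continuous_map_lower_topology_iff_continuous_map_enn2real) auto
  then show "continuous_map (prod_topology T T) lower_topology (\<lambda>(x, y). d x y) \<longleftrightarrow>
      continuous_map (prod_topology T T) (subtopology euclideanreal {0..})
        (\<lambda>(x, y). enn2real (d x y))"
    by (simp add: case_prod_unfold)
qed

end
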